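(* Let $p\ge 5$ be a prime and $k$ an integer with $1\le k\le \frac{p-3}{2}$, and put $t=p-1-2k$. Then, modulo $p$, \begin{align*} (-1)^k 4^{2k-1} E_t \equiv{}& 64^t S_t(0, \tfrac{1}{256}) + (12^t + 18^t) S_t(\tfrac{1}{16}, \tfrac{5}{72}) + 12^t S_t(\tfrac{5}{72}, \tfrac{7}{96}) + (6^t + 12^t) S_t(\tfrac{7}{48}, \tfrac{11}{72})\\ &+ (6^t + 12^t) S_t(\tfrac{13}{72}, \tfrac{3}{16}) + (4^t + 8^t + 12^t) S_t(\tfrac{11}{48}, \tfrac{15}{64}) + 18^t S_t(\tfrac{19}{72}, \tfrac{17}{64})\\ &+ (4^t + 8^t + 12^t + 18^t) S_t(\tfrac{17}{64}, \tfrac{13}{48}) + 18^t S_t(\tfrac{19}{48}, \tfrac{29}{72}) + 12^t S_t(\tfrac{41}{96}, \tfrac{7}{16})\\ &+ (2^t + 4^t + 6^t+ 8^t) S_t(\tfrac{15}{32}, \tfrac{23}{48}) + (2^t + 4^t + 6^t + 8^t + 12^t) S_t(\tfrac{23}{48}, \tfrac{31}{64})\\ &+ (2^t + 4^t + 6^t + 8^t + 12^t + 16^t) S_t(\tfrac{31}{64}, \tfrac{35}{72}) + (2^t + 4^t + 8^t + 16^t) S_t(\tfrac{35}{72}, \tfrac{63}{128})\\ &+ (2^t + 4^t + 8^t + 16^t + 32^t) S_t(\tfrac{63}{128}, \tfrac{127}{256}) + (2^t + 4^t + 8^t + 16^t + 32^t + 64^t) S_t(\tfrac{127}{256}, \tfrac{1}{2}).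 \end{align*}
   Context: $E_n$ denotes the $n$th Euler number, defined by $\sec z=\sum_{n\ge0}E_n\frac{z^n}{n!}$ (so $E_2=1$, $E_4=5$). For a prime $p$, an integer $\ell$ and real numbers $0\le x<y\le 1$, $S_\ell(x,y)=\sum_{xp<s<yp} s^\ell$, the sum over integers $s$ strictly between $xp$ and $yp$. Congruences between rational numbers modulo $p$ mean that the difference has $p$-adic valuation at least $1$. *)

theory Defs
  imports "HOL-Computational_Algebra.Computational_Algebra"
begin

definition euler_num :: "nat \<Rightarrow> rat" where
  "euler_num n = fact n * fps_nth (inverse (fps_cos (1::rat))) n"

definition Ssum :: "nat \<Rightarrow> nat \<Rightarrow> rat \<Rightarrow> rat \<Rightarrow> int" where
  "Ssum p l x y = (\<Sum>s\<in>{s::int. x * of_nat p < of_int s \<and> of_int s < y * of_nat p}. s ^ l)"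

text \<open>Congruence of rationals modulo p: the difference has p-adic valuation at least 1
  (i.e. it is zero or a reduced fraction whose numerator is divisible by p).\<close>
definition rat_cong :: "nat \<Rightarrow> rat \<Rightarrow> rat \<Rightarrow> bool" where
  "rat_cong p a b \<longleftrightarrow> (\<exists>m n::int. a - b = of_int m / of_int n \<and> coprime n (int p) \<and> int p dvd m)"

end

theory Submission
  imports Defs "HOL-Number_Theory.Number_Theory"
begin

(* Write G(i) = S_t(0, i/2304). Since 2304 = 2^8 * 3^2 is the common denominator of all
   endpoints, every S_t on the right-hand side is a difference of values of G. Modulo p the
   function G satisfies the distribution relations
     G(m k) = m^t * sum_{j<m} (G(k + j N/m) - G(j N/m))      (m = 2, 3; N = 2304),
   which come from the bijection (j, s) |-> m s - j p, and the reflection relation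
   G(N - i) + G(i) = 0, which comes from s |-> p - s together with t even and S_t(0,1) = 0
   (a primitive root permutes the nonzero residues). An explicit combination of these relations
   reduces the right-hand side to G(576) = S_t(0, 1/4).

   For the left-hand side, let P_t(w) = 2^t E_t((w + 1)/2) with E_t the Euler polynomial, so that
   P_t(w + 1) + P_t(w - 1) = 2 w^t and P_t(p) = (-1)^(t/2) E_t mod p. Telescoping gives
   2^(t+1) sum_{s<p/2} (-1)^s s^t = (-1)^((p-1)/2) P_t(p); adding S_t(0, 1/2) = 0 yields
   4^(t+1) S_t(0, 1/4) = (-1)^k E_t, and Fermat's little theorem turns 4^(-t-1) into 4^(2k-1). *)

section \<open>Power sums over rational intervals\<close>

lemma finite_Ssum_range:
  fixes x y :: rat
  shows "finite {s::int. x * of_nat p < of_int s \<and> of_int s < y * of_nat p}"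
proof (rule finite_subset)
  show "{s::int. x * of_nat p < of_int s \<and> of_int s < y * of_nat p}
      \<subseteq> {\<lfloor>x * of_nat p\<rfloor>..\<lceil>y * of_nat p\<rceil>}"
    by (auto simp: floor_le_iff le_ceiling_iff)
qed simp

lemma Ssum_empty [simp]:
  fixes x :: rat
  shows "Ssum p t x x = 0"
proof -
  have empty: "{s::int. x * of_nat p < of_int s \<and> of_int s < x * of_nat p} = {}" by auto
  show ?thesis unfolding Ssum_def empty by simp
qed

lemma Ssum_split:
  assumes "x \<le> y" "y \<le> z" "\<And>s::int. of_int s \<noteq> y * of_nat p"
  shows "Ssum p t x z = Ssum p t x y + Ssum p t y z"
proof -
  have "y * of_nat p \<le> z * of_nat p" "x * of_nat p \<le> y * of_nat p"
    using assms(1,2) by (simp_all add: mult_right_mono)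
  then have split: "{s::int. x * of_nat p < of_int s \<and> of_int s < z * of_nat p}
      = {s. x * of_nat p < of_int s \<and> of_int s < y * of_nat p}
        \<union> {s. y * of_nat p < of_int s \<and> of_int s < z * of_nat p}"
    using assms(3) by (auto simp: neq_iff)
  show ?thesis
    unfolding Ssum_def split by (rule sum.union_disjoint) (auto simp: finite_Ssum_range)
qed

lemma Ssum_reflect:
  assumes "even t"
  shows "[Ssum p t a b = Ssum p t (1 - b) (1 - a)] (mod int p)"
proof -
  let ?A = "{s::int. a * of_nat p < of_int s \<and> of_int s < b * of_nat p}"
  have "bij_betw (\<lambda>s. int p - s) ?A
      {s. (1 - b) * of_nat p < of_int s \<and> of_int s < (1 - a) * of_nat p}"
    by (rule bij_betw_byWitness[where f' = "\<lambda>s. int p - s"]) (auto simp: algebra_simps)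
  then have "Ssum p t (1 - b) (1 - a) = (\<Sum>s\<in>?A. (int p - s) ^ t)"
    unfolding Ssum_def by (simp add: sum.reindex_bij_betw[symmetric])
  moreover have "[s ^ t = (int p - s) ^ t] (mod int p)" for s
  proof -
    have "[(- s) ^ t = (int p - s) ^ t] (mod int p)"
      by (intro cong_pow) (simp add: cong_iff_dvd_diff)
    then show ?thesis using assms by simp
  qed
  ultimately show ?thesis
    unfolding Ssum_def by (simp add: cong_sum)
qed

lemma Ssum_0_inverse:
  assumes "0 < d"
  shows "Ssum p t 0 (1 / of_nat d) = (\<Sum>s = 1..(p - 1) div d. int s ^ t)"
proof -
  have below: "(of_int s < 1 / of_nat d * (of_nat p :: rat)) \<longleftrightarrow> int d * s < int p" for s
    using assms by (simp add: field_simps) (metis of_int_less_iff of_int_mult of_int_of_nat_eq)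
  have below_nat: "d * n < p \<longleftrightarrow> n \<le> (p - 1) div d" if "0 < n" for n
  proof -
    have "0 < d * n" using assms that by simp
    then have "d * n < p \<longleftrightarrow> n * d \<le> p - 1" by (simp only: mult.commute) arith
    then show ?thesis using assms by (simp add: less_eq_div_iff_mult_less_eq)
  qed
  have "s \<in> {s. (0::rat) * of_nat p < of_int s \<and> of_int s < 1 / of_nat d * (of_nat p :: rat)}
      \<longleftrightarrow> s \<in> int ` {1..(p - 1) div d}" for s
  proof (cases "0 < s")
    case True
    then obtain n where n: "s = int n" "0 < n" using zero_less_imp_eq_int by blast
    have "s \<in> {s. (0::rat) * of_nat p < of_int s \<and> of_int s < 1 / of_nat d * (of_nat p :: rat)}
        \<longleftrightarrow> d * n < p"
      using True below n(1) by (simp flip: of_nat_mult)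
    also have "\<dots> \<longleftrightarrow> n \<in> {1..(p - 1) div d}" using below_nat n(2) by simp
    finally show ?thesis using n(1) by (simp add: inj_image_mem_iff)
  qed auto
  then show ?thesis unfolding Ssum_def by (simp add: set_eq_iff sum.reindex)
qed

lemma power_sum_cong_0:
  assumes "prime p" "\<not> (p - 1) dvd t"
  shows "[(\<Sum>s\<in>{1..<int p}. s ^ t) = 0] (mod int p)"
proof -
  obtain a where a: "a \<in> totatives p" "ord p a = p - 1"
    using residue_prime_has_primroot[OF assms(1)] by blast
  then have cop: "coprime (int a) (int p)" by (simp add: in_totatives_iff)
  define S where "S = (\<Sum>s\<in>{1..<int p}. s ^ t)"
  have "S = (\<Sum>s\<in>{1..<int p}. (int a * s mod int p) ^ t)"
    unfolding S_def
    using sum.reindex_bij_betw[OF bij_betw_int_remainders_mult[OF cop], of "\<lambda>s. s ^ t"] by simp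
  also have "[(\<Sum>s\<in>{1..<int p}. (int a * s mod int p) ^ t)
      = (\<Sum>s\<in>{1..<int p}. (int a * s) ^ t)] (mod int p)"
    by (intro cong_sum cong_pow) (simp add: cong_def)
  also have "(\<Sum>s\<in>{1..<int p}. (int a * s) ^ t) = int a ^ t * S"
    unfolding S_def by (simp add: power_mult_distrib sum_distrib_left)
  finally have "[int a ^ t * S = S] (mod int p)"
    by (rule cong_sym)
  then have "int p dvd (int a ^ t - 1) * S"
    by (simp add: cong_iff_dvd_diff left_diff_distrib)
  moreover have "\<not> int p dvd int a ^ t - 1"
  proof
    assume "int p dvd int a ^ t - 1"
    then have "[a ^ t = 1] (mod p)"
      by (simp add: cong_iff_dvd_diff flip: cong_int_iff)
    then show False using a(2) assms(2) by (simp add: ord_divides')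
  qed
  moreover have "prime (int p)" using assms(1) by simp
  ultimately have "int p dvd S" by (simp add: prime_dvd_mult_iff)
  then show ?thesis by (simp add: S_def cong_0_iff)
qed

lemma Ssum_0_1_cong_0:
  assumes "prime p" "\<not> (p - 1) dvd t"
  shows "[Ssum p t 0 1 = 0] (mod int p)"
proof -
  have below_p: "(of_int s < (of_nat p :: rat)) \<longleftrightarrow> s < int p" for s
    using of_int_less_iff[of s "int p", where 'a = rat] by simp
  have range: "{s::int. (0::rat) * of_nat p < of_int s \<and> of_int s < (1::rat) * of_nat p} = {1..<int p}"
    by (auto simp: below_p)
  show ?thesis
    unfolding Ssum_def range by (rule power_sum_cong_0[OF assms])
qed

lemma bij_betw_mult_diff_mult:
  assumes "0 < m" "coprime (int m) (int p)"
  shows "bij_betw (\<lambda>(j, s). int m * s - int j * int p) ({..<m} \<times> UNIV) UNIV"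
  unfolding bij_betw_def
proof
  show "inj_on (\<lambda>(j, s). int m * s - int j * int p) ({..<m} \<times> UNIV)"
  proof (rule inj_onI, clarsimp)
    fix j j' :: nat and s s' :: int
    assume j: "j < m" "j' < m" and eq: "int m * s - int j * int p = int m * s' - int j' * int p"
    then have "(int j - int j') * int p = int m * (s - s')"
      by (simp add: algebra_simps)
    then have "int m dvd (int j - int j') * int p" by simp
    then have "int m dvd int j - int j'"
      using assms(2) by (simp add: coprime_dvd_mult_left_iff)
    with j have "j = j'"
      using dvd_imp_le_int[of "int j - int j'" "int m"] by linarith
    then show "j = j' \<and> s = s'" using eq assms(1) by simp
  qed
  have "u \<in> (\<lambda>(j, s). int m * s - int j * int p) ` ({..<m} \<times> UNIV)" for u
  proof -
    obtain v where v: "[v * int p = 1] (mod int m)"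
      using cong_solve_coprime_int[of "int p" "int m"] assms(2) by (auto simp: coprime_commute mult.commute)
    define j where "j = nat ((- u * v) mod int m)"
    have j: "j < m" "[int j = - u * v] (mod int m)"
      using assms(1) by (simp_all add: j_def cong_def nat_less_iff)
    have "[u + int j * int p = u + - u * v * int p] (mod int m)"
      using j(2) by (intro cong_add cong_mult cong_refl)
    also have "u + - u * v * int p = u + - u * (v * int p)"
      by (simp only: mult.assoc)
    also have "[u + - u * (v * int p) = u + - u * 1] (mod int m)"
      using v by (intro cong_add cong_mult cong_refl)
    finally obtain s where "u + int j * int p = int m * s"
      by (auto simp: cong_0_iff elim: dvdE)
    then show ?thesis using j(1) by (auto intro!: image_eqI[of u _ "(j, s)"])
  qed
  then show "(\<lambda>(j, s). int m * s - int j * int p) ` ({..<m} \<times> UNIV) = UNIV"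
    by blast
qed

lemma Ssum_distribution:
  assumes "0 < m" "coprime (int m) (int p)"
  shows "[Ssum p t 0 x = int m ^ t
      * (\<Sum>j<m. Ssum p t (of_nat j / of_nat m) ((x + of_nat j) / of_nat m))] (mod int p)"
proof -
  define f :: "nat \<times> int \<Rightarrow> int" where "f = (\<lambda>(j, s). int m * s - int j * int p)"
  define U where "U = {u::int. (0::rat) * of_nat p < of_int u \<and> of_int u < x * of_nat p}"
  define T where "T j = {s::int. of_nat j / of_nat m * of_nat p < (of_int s :: rat)
    \<and> of_int s < (x + of_nat j) / of_nat m * of_nat p}" for j
  have T_iff: "s \<in> T j \<longleftrightarrow> f (j, s) \<in> U" for j s
    using assms(1) of_int_less_iff[of "int j * int p" "s * int m", where 'a = rat]
    by (simp add: T_def U_def f_def field_simps)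
  have bij: "bij_betw f ({..<m} \<times> UNIV) UNIV"
    unfolding f_def by (rule bij_betw_mult_diff_mult[OF assms])
  then have "bij_betw f (Sigma {..<m} T) U"
  proof (rule bij_betw_subset)
    show "f ` Sigma {..<m} T = U"
    proof (intro equalityI subsetI)
      fix u assume u: "u \<in> U"
      have "u \<in> f ` ({..<m} \<times> UNIV)" using bij_betw_imp_surj_on[OF bij] by simp
      then obtain j s where js: "j < m" "u = f (j, s)" by auto
      then have "(j, s) \<in> Sigma {..<m} T" using u T_iff by simp
      then show "u \<in> f ` Sigma {..<m} T" using js(2) by blast
    qed (auto simp: T_iff)
  qed auto
  then have "Ssum p t 0 x = (\<Sum>a\<in>Sigma {..<m} T. f a ^ t)"
    unfolding Ssum_def U_def[symmetric] using sum.reindex_bij_betw[of f _ U "\<lambda>u. u ^ t"] by simp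
  also have "[(\<Sum>a\<in>Sigma {..<m} T. f a ^ t)
      = (\<Sum>a\<in>Sigma {..<m} T. (int m * snd a) ^ t)] (mod int p)"
    by (intro cong_sum cong_pow) (auto simp: f_def cong_iff_dvd_diff)
  also have "(\<Sum>a\<in>Sigma {..<m} T. (int m * snd a) ^ t)
      = (\<Sum>j<m. \<Sum>s\<in>T j. (int m * s) ^ t)"
    by (subst sum.Sigma) (auto simp: split_def T_def finite_Ssum_range simp del: times_divide_eq_left)
  also have "\<dots> = int m ^ t * (\<Sum>j<m. Ssum p t (of_nat j / of_nat m) ((x + of_nat j) / of_nat m))"
    by (simp add: Ssum_def T_def power_mult_distrib sum_distrib_left)
  finally show ?thesis .
qed

section \<open>Relations between sums on a grid\<close>

definition grid_sum :: "nat \<Rightarrow> nat \<Rightarrow> nat \<Rightarrow> nat \<Rightarrow> int" where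
  "grid_sum p t N i = Ssum p t 0 (of_nat i / of_nat N)"

lemma grid_sum_0 [simp]: "grid_sum p t N 0 = 0"
  by (simp add: grid_sum_def)

lemma Ssum_grid:
  assumes "coprime N p" "i < N" "i \<le> j"
  shows "Ssum p t (of_nat i / of_nat N) (of_nat j / of_nat N) = grid_sum p t N j - grid_sum p t N i"
proof (cases "i = 0")
  case True
  then show ?thesis by (simp add: grid_sum_def)
next
  case False
  have "of_int s \<noteq> of_nat i / of_nat N * (of_nat p :: rat)" for s
  proof
    assume "of_int s = of_nat i / of_nat N * (of_nat p :: rat)"
    then have "s * int N = int i * int p"
      using assms(2) of_int_eq_iff[of "s * int N" "int i * int p", where 'a = rat]
      by (simp add: field_simps)
    then have "N dvd i * p"
      by (metis dvd_triv_right int_dvd_int_iff of_nat_mult)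
    then have "N dvd i" using assms(1) by (simp add: coprime_dvd_mult_left_iff)
    then show False using False assms(2) by (auto dest: dvd_imp_le)
  qed
  then show ?thesis
    using Ssum_split[of 0 "of_nat i / of_nat N" "of_nat j / of_nat N" p t] assms(3)
    by (simp add: grid_sum_def divide_right_mono)
qed

lemma grid_sum_reflect:
  assumes "prime p" "coprime N p" "even t" "\<not> (p - 1) dvd t" "i \<le> N"
  shows "[grid_sum p t N (N - i) + grid_sum p t N i = 0] (mod int p)"
proof -
  have "0 < N" using assms(1,2) by (cases N) (auto simp: not_prime_unit)
  then have full: "[grid_sum p t N N = 0] (mod int p)"
    using Ssum_0_1_cong_0[OF assms(1,4)] by (simp add: grid_sum_def)
  consider "i = 0" | "i = N" | "0 < i" "i < N" using assms(5) by linarith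
  then show ?thesis
  proof cases
    case 3
    have "of_nat (N - i) / of_nat N = 1 - of_nat i / (of_nat N :: rat)"
      using \<open>0 < N\<close> assms(5) by (simp add: of_nat_diff field_simps)
    then have "[grid_sum p t N (N - i) = Ssum p t (of_nat i / of_nat N) (of_nat N / of_nat N)] (mod int p)"
      using Ssum_reflect[OF assms(3), of p "of_nat i / of_nat N" 1] \<open>0 < N\<close>
      by (simp add: grid_sum_def cong_sym_eq)
    also have "Ssum p t (of_nat i / of_nat N) (of_nat N / of_nat N) = grid_sum p t N N - grid_sum p t N i"
      using Ssum_grid[OF assms(2) \<open>i < N\<close> assms(5)] \<open>0 < N\<close> by simp
    finally have "[grid_sum p t N (N - i) + grid_sum p t N i = grid_sum p t N N] (mod int p)"
      by (metis cong_add_rcancel diff_add_cancel)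
    then show ?thesis using full by (rule cong_trans)
  qed (use full in simp_all)
qed

lemma grid_sum_distribution:
  assumes "coprime (m * d) p" "0 < m" "0 < d"
  shows "[grid_sum p t (m * d) (m * k) = int m ^ t
      * (\<Sum>j<m. grid_sum p t (m * d) (k + j * d) - grid_sum p t (m * d) (j * d))] (mod int p)"
proof -
  have "coprime (int m) (int p)" using assms(1) by simp
  moreover have "grid_sum p t (m * d) (m * k) = Ssum p t 0 (of_nat (m * k) / of_nat (m * d))"
    by (simp add: grid_sum_def)
  moreover have "Ssum p t (of_nat j / of_nat m) ((of_nat (m * k) / of_nat (m * d) + of_nat j) / of_nat m)
      = grid_sum p t (m * d) (k + j * d) - grid_sum p t (m * d) (j * d)" if "j < m" for j
  proof -
    have "j * d < m * d" using that assms(3) by simp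
    then show ?thesis
      using Ssum_grid[OF assms(1), of "j * d" "k + j * d" t] assms(2,3)
      by (simp add: field_simps)
  qed
  ultimately show ?thesis
    using Ssum_distribution[OF assms(2), of p t "of_nat (m * k) / of_nat (m * d)"] by simp
qed

text \<open>Read \<open>g i\<close> as \<open>S_t(0, i/2304)\<close>, \<open>X\<close> as \<open>2^t\<close> and \<open>Y\<close> as \<open>3^t\<close>;
  \<open>2304 = 2^8 * 3^2\<close> is the common denominator of all endpoints in the theorem.\<close>
lemma grid_relations_combination_cong:
  fixes g :: "nat \<Rightarrow> int" and X Y q :: int
  assumes dist2: "\<And>k. [g (2 * k) = X * (g k + g (k + 1152) - g 1152)] (mod q)"
    and dist3: "\<And>k. [g (3 * k) = Y * (g k + g (k + 768) + g (k + 1536) - g 768 - g 1536)] (mod q)"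
    and reflect: "\<And>i. i \<le> 2304 \<Longrightarrow> [g (2304 - i) + g i = 0] (mod q)"
  shows "[X ^ 6 * g 9
      + (X ^ 2 * Y + X * Y ^ 2) * (g 160 - g 144)
      + X ^ 2 * Y * (g 168 - g 160)
      + (X * Y + X ^ 2 * Y) * (g 352 - g 336)
      + (X * Y + X ^ 2 * Y) * (g 432 - g 416)
      + (X ^ 2 + X ^ 3 + X ^ 2 * Y) * (g 540 - g 528)
      + X * Y ^ 2 * (g 612 - g 608)
      + (X ^ 2 + X ^ 3 + X ^ 2 * Y + X * Y ^ 2) * (g 624 - g 612)
      + X * Y ^ 2 * (g 928 - g 912)
      + X ^ 2 * Y * (g 1008 - g 984)
      + (X + X ^ 2 + X * Y + X ^ 3) * (g 1104 - g 1080)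
      + (X + X ^ 2 + X * Y + X ^ 3 + X ^ 2 * Y) * (g 1116 - g 1104)
      + (X + X ^ 2 + X * Y + X ^ 3 + X ^ 2 * Y + X ^ 4) * (g 1120 - g 1116)
      + (X + X ^ 2 + X ^ 3 + X ^ 4) * (g 1134 - g 1120)
      + (X + X ^ 2 + X ^ 3 + X ^ 4 + X ^ 5) * (g 1143 - g 1134)
      + (X + X ^ 2 + X ^ 3 + X ^ 4 + X ^ 5 + X ^ 6) * (g 1152 - g 1143)
      = g 576] (mod q)"
proof -
  define D2 where "D2 k = g (2 * k) - X * (g k + g (k + 1152) - g 1152)" for k
  define D3 where "D3 k = g (3 * k) - Y * (g k + g (k + 768) + g (k + 1536) - g 768 - g 1536)" for k
  define R where "R i = g (2304 - i) + g i" for i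
  have D2: "q dvd D2 k" and D3: "q dvd D3 k" for k
    using dist2[of k] dist3[of k] by (simp_all add: D2_def D3_def cong_iff_dvd_diff)
  have R: "q dvd R i" if "i \<le> 2304" for i
    using reflect[OF that] by (simp add: R_def cong_0_iff)
  have "X ^ 6 * g 9
        + (X ^ 2 * Y + X * Y ^ 2) * (g 160 - g 144)
        + X ^ 2 * Y * (g 168 - g 160)
        + (X * Y + X ^ 2 * Y) * (g 352 - g 336)
        + (X * Y + X ^ 2 * Y) * (g 432 - g 416)
        + (X ^ 2 + X ^ 3 + X ^ 2 * Y) * (g 540 - g 528)
        + X * Y ^ 2 * (g 612 - g 608)
        + (X ^ 2 + X ^ 3 + X ^ 2 * Y + X * Y ^ 2) * (g 624 - g 612)
        + X * Y ^ 2 * (g 928 - g 912)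
        + X ^ 2 * Y * (g 1008 - g 984)
        + (X + X ^ 2 + X * Y + X ^ 3) * (g 1104 - g 1080)
        + (X + X ^ 2 + X * Y + X ^ 3 + X ^ 2 * Y) * (g 1116 - g 1104)
        + (X + X ^ 2 + X * Y + X ^ 3 + X ^ 2 * Y + X ^ 4) * (g 1120 - g 1116)
        + (X + X ^ 2 + X ^ 3 + X ^ 4) * (g 1134 - g 1120)
        + (X + X ^ 2 + X ^ 3 + X ^ 4 + X ^ 5) * (g 1143 - g 1134)
        + (X + X ^ 2 + X ^ 3 + X ^ 4 + X ^ 5 + X ^ 6) * (g 1152 - g 1143)
      - g 576 =
      (D2 72 - D2 96 - D2 216 + D2 288 + 2 * D2 864 - D2 936 - D2 1008 + D2 1080 + D3 64
          - D3 96 - R 144 + R 288 + R 432 - 2 * R 576)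
      + X * (D2 72 - D2 96 + D2 612 - D2 624 - D2 684 + D2 720 + D2 1080 - D3 32 + D3 48
          + D3 64 - D3 96 + 2 * D3 288 - D3 312 - D3 336 + R 72 - 2 * R 144 - R 216
          + 2 * R 288)
      + X ^ 2 * (D2 612 - D2 624 + D2 1080 - D3 32 + D3 48 - D3 144 + D3 156 - D3 228
          + D3 240 + R 72 - R 144 + R 432 - R 468 - R 528 + R 540)
      + X ^ 3 * (D2 1116 - R 528 + R 540)
      + X ^ 4 * D2 1134
      + X ^ 5 * D2 1143
      + X ^ 6 * R 9
      + Y * (D2 72 - D2 96 + D2 416 - D2 432 - D2 672 + D2 720 + D2 800 - D2 816 - D2 1056
          + D2 1080 + D2 1104 - D2 1120 + D3 448 - D3 480 + R 64 - R 96 - R 144 + R 192)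
      + X * Y * (D2 416 - D2 432 + D2 528 - D2 540 + D2 612 - D2 624 + D2 800 - D2 816
          + D2 912 - D2 924 + D2 984 + D2 996 - 2 * D2 1008 + D2 1104 - D2 1120 - D3 224
          + D3 240 - R 32 + R 48 + R 64 + R 72 - 2 * R 96 + 2 * R 288 - R 312 - 2 * R 336
          + R 352)
      + X ^ 2 * Y * (- R 32 + R 48 - 2 * R 144 + R 156 + R 168 - R 228 + R 240 - R 336
          + R 352)
      + Y ^ 2 * (D2 608 - D2 624 + D2 912 - D2 928 + D2 992 - D2 1008 + R 448 - R 480)
      + X * Y ^ 2 * (- R 144 + R 160 - R 224 + R 240)"
    by (simp add: D2_def D3_def R_def power_numeral_reduce algebra_simps)
  then show ?thesis
    unfolding cong_iff_dvd_diff
    by (simp only:) (intro dvd_add dvd_diff dvd_mult dvd_minus_iff[THEN iffD2] D2 D3 R; simp)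
qed

lemma Ssum_combination_cong_quarter:
  fixes p t :: nat
  assumes "prime p" "5 \<le> p" "even t" "\<not> (p - 1) dvd t"
  shows "[64 ^ t * Ssum p t 0 (1/256)
     + (12 ^ t + 18 ^ t) * Ssum p t (1/16) (5/72)
     + 12 ^ t * Ssum p t (5/72) (7/96)
     + (6 ^ t + 12 ^ t) * Ssum p t (7/48) (11/72)
     + (6 ^ t + 12 ^ t) * Ssum p t (13/72) (3/16)
     + (4 ^ t + 8 ^ t + 12 ^ t) * Ssum p t (11/48) (15/64)
     + 18 ^ t * Ssum p t (19/72) (17/64)
     + (4 ^ t + 8 ^ t + 12 ^ t + 18 ^ t) * Ssum p t (17/64) (13/48)
     + 18 ^ t * Ssum p t (19/48) (29/72)
     + 12 ^ t * Ssum p t (41/96) (7/16)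
     + (2 ^ t + 4 ^ t + 6 ^ t + 8 ^ t) * Ssum p t (15/32) (23/48)
     + (2 ^ t + 4 ^ t + 6 ^ t + 8 ^ t + 12 ^ t) * Ssum p t (23/48) (31/64)
     + (2 ^ t + 4 ^ t + 6 ^ t + 8 ^ t + 12 ^ t + 16 ^ t) * Ssum p t (31/64) (35/72)
     + (2 ^ t + 4 ^ t + 8 ^ t + 16 ^ t) * Ssum p t (35/72) (63/128)
     + (2 ^ t + 4 ^ t + 8 ^ t + 16 ^ t + 32 ^ t) * Ssum p t (63/128) (127/256)
     + (2 ^ t + 4 ^ t + 8 ^ t + 16 ^ t + 32 ^ t + 64 ^ t) * Ssum p t (127/256) (1/2)
    = Ssum p t 0 (1 / 4)] (mod int p)"
proof -
  define g where "g = grid_sum p t 2304"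
  have "\<not> p dvd 2" "\<not> p dvd 3" using assms(2) by (auto dest: dvd_imp_le)
  then have "coprime 2 p" "coprime 3 p"
    using prime_imp_coprime[OF assms(1)] coprime_commute by blast+
  then have "coprime (2 ^ 8 * 3 ^ 2) p"
    by (simp only: coprime_mult_left_iff coprime_power_left_iff) simp
  then have cop: "coprime 2304 p" by simp
  have sum2: "(\<Sum>j<2. f j) = f 0 + f 1" and sum3: "(\<Sum>j<3. f j) = f 0 + f 1 + f 2"
    for f :: "nat \<Rightarrow> int"
    by (simp_all add: numeral_2_eq_2 numeral_3_eq_3)
  have ss: "Ssum p t (of_nat i / 2304) (of_nat j / 2304) = g j - g i" if "i < 2304" "i \<le> j" for i j
    using Ssum_grid[OF cop that] by (simp add: g_def)
  have swap: "((a::int) ^ t) ^ j = (a ^ j) ^ t" for a j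
    by (simp only: power_mult[symmetric] mult.commute)
  have pow: "(4::int) ^ t = (2 ^ t) ^ 2" "(6::int) ^ t = 2 ^ t * 3 ^ t" "(8::int) ^ t = (2 ^ t) ^ 3"
    "(12::int) ^ t = (2 ^ t) ^ 2 * 3 ^ t" "(16::int) ^ t = (2 ^ t) ^ 4" "(18::int) ^ t = 2 ^ t * (3 ^ t) ^ 2"
    "(32::int) ^ t = (2 ^ t) ^ 5" "(64::int) ^ t = (2 ^ t) ^ 6"
    by (simp_all add: swap flip: power_mult_distrib)
  have dist2: "[g (2 * k) = 2 ^ t * (g k + g (k + 1152) - g 1152)] (mod int p)" for k
    using grid_sum_distribution[of 2 1152 p t k] cop by (simp add: g_def sum2 algebra_simps)
  have dist3: "[g (3 * k) = 3 ^ t * (g k + g (k + 768) + g (k + 1536) - g 768 - g 1536)] (mod int p)"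
    for k
    using grid_sum_distribution[of 3 768 p t k] cop by (simp add: g_def sum3 algebra_simps)
  have reflect: "[g (2304 - i) + g i = 0] (mod int p)" if "i \<le> 2304" for i
    using grid_sum_reflect[OF assms(1) cop assms(3,4) that] by (simp add: g_def)
  have ends: "Ssum p t 0 (1 / 256) = g 9" "Ssum p t 0 (1 / 4) = g 576"
    by (simp_all add: g_def grid_sum_def)
  show ?thesis
    unfolding pow ends ss[of 144 160, simplified] ss[of 160 168, simplified]
      ss[of 336 352, simplified] ss[of 416 432, simplified] ss[of 528 540, simplified]
      ss[of 608 612, simplified] ss[of 612 624, simplified] ss[of 912 928, simplified]
      ss[of 984 1008, simplified] ss[of 1080 1104, simplified] ss[of 1104 1116, simplified]
      ss[of 1116 1120, simplified] ss[of 1120 1134, simplified] ss[of 1134 1143, simplified]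
      ss[of 1143 1152, simplified]
    by (rule grid_relations_combination_cong[OF dist2 dist3 reflect])
qed

section \<open>Euler numbers and Euler polynomials\<close>

definition cos_sign :: "nat \<Rightarrow> int" where
  "cos_sign n = (if even n then (-1) ^ (n div 2) else 0)"

lemma euler_num_recurrence:
  "(\<Sum>i = 0..n. of_nat (n choose i) * of_int (cos_sign i) * euler_num (n - i))
    = (if n = 0 then 1 else 0)"
proof -
  have "(\<Sum>i = 0..n. of_nat (n choose i) * of_int (cos_sign i) * euler_num (n - i))
      = fact n * (\<Sum>i = 0..n. fps_cos 1 $ i * inverse (fps_cos (1::rat)) $ (n - i))"
    unfolding sum_distrib_left
  proof (rule sum.cong)
    fix i assume "i \<in> {0..n}"
    then have "of_nat (n choose i) = (fact n / (fact i * fact (n - i)) :: rat)"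
      by (simp add: binomial_fact)
    then show "of_nat (n choose i) * of_int (cos_sign i) * euler_num (n - i)
        = fact n * (fps_cos 1 $ i * inverse (fps_cos 1) $ (n - i))"
      by (simp add: euler_num_def fps_cos_def cos_sign_def field_simps)
  qed simp
  also have "\<dots> = fact n * (fps_cos 1 * inverse (fps_cos (1::rat))) $ n"
    by (simp add: fps_mult_nth)
  also have "\<dots> = (if n = 0 then 1 else 0)"
    by (simp add: inverse_mult_eq_1')
  finally show ?thesis .
qed

lemma euler_num_Ints: "euler_num n \<in> \<int>"
proof (induction n rule: less_induct)
  case (less n)
  have split: "(\<Sum>i = 0..n. of_nat (n choose i) * of_int (cos_sign i) * euler_num (n - i))
      = euler_num n + (\<Sum>i = 1..n. of_nat (n choose i) * of_int (cos_sign i) * euler_num (n - i))"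
    by (simp add: sum.atLeast_Suc_atMost cos_sign_def)
  have "(\<Sum>i = 1..n. of_nat (n choose i) * of_int (cos_sign i) * euler_num (n - i)) \<in> \<int>"
    using less.IH by (intro Ints_sum Ints_mult) auto
  then show ?case
    using euler_num_recurrence[of n] unfolding split
    by (cases "n = 0") (auto simp: eq_diff_eq[symmetric] minus_in_Ints_iff)
qed

definition euler_int :: "nat \<Rightarrow> int" where
  "euler_int n = \<lfloor>euler_num n\<rfloor>"

lemma of_int_euler_int [simp]: "of_int (euler_int n) = euler_num n"
  unfolding euler_int_def using euler_num_Ints by (metis Ints_cases floor_of_int)

text \<open>\<open>sech_num n\<close> is \<open>n!\<close> times the \<open>n\<close>-th Taylor coefficient of
  \<open>sech z = sec (i z)\<close>, i.e. \<open>(-1)^(n/2) E_n\<close> for even \<open>n\<close>.\<close>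
definition sech_num :: "nat \<Rightarrow> int" where
  "sech_num n = cos_sign n * euler_int n"

lemma sech_num_odd: "odd n \<Longrightarrow> sech_num n = 0"
  by (simp add: sech_num_def cos_sign_def)

lemma cos_sign_complement:
  assumes "even n" "even k" "k \<le> n"
  shows "cos_sign k = (-1) ^ (n div 2) * cos_sign (n - k)"
proof -
  have "n div 2 = k div 2 + (n - k) div 2" using assms by auto
  then show ?thesis using assms by (simp add: cos_sign_def power_add mult.assoc)
qed

lemma sech_num_recurrence:
  "(\<Sum>k = 0..n. int (n choose k) * sech_num k * (1 + (-1) ^ (n - k))) = (if n = 0 then 2 else 0)"
proof (cases "even n")
  case False
  have "int (n choose k) * sech_num k * (1 + (-1) ^ (n - k)) = 0" if "k \<le> n" for k
    using False that by (cases "even k") (simp_all add: sech_num_odd)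
  then show ?thesis using False by (auto intro: sum.neutral)
next
  case True
  have "(\<Sum>k = 0..n. int (n choose k) * sech_num k * (1 + (-1) ^ (n - k)))
      = 2 * (-1) ^ (n div 2) * (\<Sum>k = 0..n. int (n choose k) * cos_sign (n - k) * euler_int k)"
    unfolding sum_distrib_left
  proof (rule sum.cong)
    fix k assume "k \<in> {0..n}"
    then show "int (n choose k) * sech_num k * (1 + (-1) ^ (n - k))
        = 2 * (-1) ^ (n div 2) * (int (n choose k) * cos_sign (n - k) * euler_int k)"
      using True cos_sign_complement[OF True, of k]
      by (cases "even k") (auto simp: sech_num_def cos_sign_def)
  qed simp
  also have "(\<Sum>k = 0..n. int (n choose k) * cos_sign (n - k) * euler_int k)
      = (\<Sum>i = 0..n. int (n choose i) * cos_sign i * euler_int (n - i))"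
    by (subst sum.atLeastAtMost_rev) (auto intro!: sum.cong simp: binomial_symmetric[symmetric])
  also have "\<dots> = (if n = 0 then 1 else 0)"
  proof -
    have "(of_int (\<Sum>i = 0..n. int (n choose i) * cos_sign i * euler_int (n - i)) :: rat)
        = of_int (if n = 0 then 1 else 0)"
      using euler_num_recurrence[of n] by simp
    then show ?thesis by (simp only: of_int_eq_iff)
  qed
  finally show ?thesis by simp
qed

definition sech_fps :: "'a::field_char_0 fps" where
  "sech_fps = Abs_fps (\<lambda>n. of_int (sech_num n) / fact n)"

lemma sech_fps_mult_cosh: "sech_fps * (fps_exp 1 + fps_exp (-1)) = (2 :: 'a::field_char_0 fps)"
proof (rule fps_ext)
  fix n
  have "(sech_fps * (fps_exp 1 + fps_exp (-1))) $ n
      = (\<Sum>k = 0..n. of_int (sech_num k) / fact k * ((1 + (-1) ^ (n - k)) / fact (n - k)) :: 'a)"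
    by (simp add: fps_mult_nth sech_fps_def add_divide_distrib)
  also have "\<dots> = of_int (\<Sum>k = 0..n. int (n choose k) * sech_num k * (1 + (-1) ^ (n - k))) / fact n"
    unfolding of_int_sum sum_divide_distrib
  proof (rule sum.cong)
    fix k assume "k \<in> {0..n}"
    then have binom: "of_nat (n choose k) = (fact n / (fact k * fact (n - k)) :: 'a)"
      by (simp add: binomial_fact)
    show "of_int (sech_num k) / fact k * ((1 + (-1) ^ (n - k)) / fact (n - k))
        = (of_int (int (n choose k) * sech_num k * (1 + (-1) ^ (n - k))) / fact n :: 'a)"
      by (simp add: binom field_simps)
  qed simp
  also have "\<dots> = (2 :: 'a fps) $ n"
    by (simp add: sech_num_recurrence numeral_fps_const)
  finally show "(sech_fps * (fps_exp 1 + fps_exp (-1))) $ n = (2 :: 'a fps) $ n" .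
qed

text \<open>\<open>scaled_euler_poly n w = 2^n E_n((w + 1) / 2)\<close> with \<open>E_n\<close> the Euler polynomial.\<close>
definition scaled_euler_poly :: "nat \<Rightarrow> 'a::comm_ring_1 \<Rightarrow> 'a" where
  "scaled_euler_poly n w = (\<Sum>k = 0..n. of_nat (n choose k) * of_int (sech_num k) * w ^ (n - k))"

lemma of_int_scaled_euler_poly: "of_int (scaled_euler_poly n w) = scaled_euler_poly n (of_int w)"
  by (simp add: scaled_euler_poly_def)

lemma sech_fps_mult_exp_nth:
  "(sech_fps * fps_exp w) $ n = scaled_euler_poly n (w :: 'a::field_char_0) / fact n"
proof -
  have "(sech_fps * fps_exp w) $ n
      = (\<Sum>k = 0..n. of_int (sech_num k) / fact k * (w ^ (n - k) / fact (n - k)))"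
    by (simp add: fps_mult_nth sech_fps_def)
  also have "\<dots> = (\<Sum>k = 0..n. of_nat (n choose k) * of_int (sech_num k) * w ^ (n - k) / fact n)"
  proof (rule sum.cong)
    fix k assume "k \<in> {0..n}"
    then have "of_nat (n choose k) = (fact n / (fact k * fact (n - k)) :: 'a)"
      by (simp add: binomial_fact)
    then show "of_int (sech_num k) / fact k * (w ^ (n - k) / fact (n - k))
        = of_nat (n choose k) * of_int (sech_num k) * w ^ (n - k) / fact n"
      by (simp add: field_simps)
  qed simp
  finally show ?thesis by (simp add: scaled_euler_poly_def sum_divide_distrib)
qed

lemma scaled_euler_poly_shift:
  "scaled_euler_poly n (w + 1) + scaled_euler_poly n (w - 1) = 2 * (w :: 'a::field_char_0) ^ n"
proof -
  have "fps_exp (w + 1) = fps_exp w * fps_exp 1" "fps_exp (w - 1) = fps_exp w * fps_exp (-1)"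
    using fps_exp_add_mult[of w 1] fps_exp_add_mult[of w "-1"] by simp_all
  then have "sech_fps * (fps_exp (w + 1) + fps_exp (w - 1))
      = sech_fps * (fps_exp 1 + fps_exp (-1)) * fps_exp w"
    by (simp add: algebra_simps)
  also have "\<dots> = 2 * fps_exp w"
    by (simp only: sech_fps_mult_cosh)
  finally have "(sech_fps * fps_exp (w + 1) + sech_fps * fps_exp (w - 1)) $ n = (2 * fps_exp w) $ n"
    by (simp only: distrib_left)
  then show ?thesis
    by (simp add: sech_fps_mult_exp_nth numeral_fps_const field_simps)
qed

lemma scaled_euler_poly_1:
  assumes "even n" "0 < n"
  shows "scaled_euler_poly n (1 :: 'a::field_char_0) = 0"
proof -
  have "scaled_euler_poly n (-1 :: 'a) = scaled_euler_poly n 1"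
    unfolding scaled_euler_poly_def
  proof (intro sum.cong refl)
    fix k assume "k \<in> {0..n}"
    then show "of_nat (n choose k) * of_int (sech_num k) * (-1) ^ (n - k)
        = of_nat (n choose k) * of_int (sech_num k) * (1 :: 'a) ^ (n - k)"
      using assms(1) by (cases "even k") (simp_all add: sech_num_odd)
  qed
  then show ?thesis
    using scaled_euler_poly_shift[of n "0 :: 'a"] assms(2) by simp
qed

lemma alternating_power_sum:
  assumes "even t" "0 < t"
  shows "2 ^ (t + 1) * (\<Sum>s = 1..n. (-1) ^ s * of_nat s ^ t)
    = (-1) ^ n * scaled_euler_poly t (2 * of_nat n + 1 :: 'a::field_char_0)"
proof (induction n)
  case 0
  show ?case using scaled_euler_poly_1[OF assms] by simp
next
  case (Suc n)
  have shift: "scaled_euler_poly t (2 * of_nat (Suc n) + 1) + scaled_euler_poly t (2 * of_nat n + 1)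
      = 2 * (2 ^ t * of_nat (Suc n) ^ t :: 'a)"
    using scaled_euler_poly_shift[of t "2 * of_nat (Suc n) :: 'a"]
    unfolding power_mult_distrib by (simp add: algebra_simps)
  have "2 ^ (t + 1) * (\<Sum>s = 1..Suc n. (-1) ^ s * of_nat s ^ t)
      = 2 ^ (t + 1) * (\<Sum>s = 1..n. (-1) ^ s * of_nat s ^ t)
        + (-1) ^ Suc n * (2 * (2 ^ t * of_nat (Suc n) ^ t) :: 'a)"
    by (simp add: algebra_simps)
  also have "\<dots> = (-1) ^ Suc n * scaled_euler_poly t (2 * of_nat (Suc n) + 1)"
    unfolding Suc.IH shift[symmetric] by (simp add: algebra_simps)
  finally show ?case .
qed

lemma scaled_euler_poly_cong: "[scaled_euler_poly n w = sech_num n] (mod w)"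
proof -
  have "scaled_euler_poly n w = (\<Sum>k<n. int (n choose k) * sech_num k * w ^ (n - k)) + sech_num n"
    by (simp add: scaled_euler_poly_def atLeast0AtMost lessThan_Suc_atMost[symmetric])
  moreover have "w dvd (\<Sum>k<n. int (n choose k) * sech_num k * w ^ (n - k))"
    by (intro dvd_sum dvd_mult dvd_power) auto
  ultimately show ?thesis by (simp add: cong_iff_dvd_diff)
qed

lemma power_sum_add_alternating:
  "(\<Sum>s = 1..n. (-1) ^ s * int s ^ t) + (\<Sum>s = 1..n. int s ^ t)
    = 2 ^ (t + 1) * (\<Sum>r = 1..n div 2. int r ^ t)"
proof -
  have "(\<Sum>s = 1..n. (-1) ^ s * int s ^ t) + (\<Sum>s = 1..n. int s ^ t)
      = (\<Sum>s = 1..n. if even s then 2 * int s ^ t else 0)"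
    unfolding sum.distrib[symmetric] by (intro sum.cong refl) simp
  also have "\<dots> = (\<Sum>s\<in>{s\<in>{1..n}. even s}. 2 * int s ^ t)"
    by (simp only: sum.inter_filter[OF finite_atLeastAtMost])
  also have "{s\<in>{1..n}. even s} = (\<lambda>r. 2 * r) ` {1..n div 2}"
    by (auto elim!: evenE)
  also have "(\<Sum>s\<in>(\<lambda>r. 2 * r) ` {1..n div 2}. 2 * int s ^ t)
      = 2 ^ (t + 1) * (\<Sum>r = 1..n div 2. int r ^ t)"
    by (subst sum.reindex) (auto simp: inj_on_def sum_distrib_left power_mult_distrib mult.assoc)
  finally show ?thesis .
qed

section \<open>The Euler number as a quarter-interval sum\<close>

lemma exponent_even_not_dvd:
  fixes p k t :: nat
  assumes "odd p" "1 \<le> k" "2 * k \<le> p - 3" "t = p - 1 - 2 * k"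
  shows "even t" "\<not> (p - 1) dvd t"
proof -
  have "t = 2 * ((p - 1) div 2 - k)" "0 < t" "t < p - 1"
    using assms by (auto elim!: oddE)
  then show "even t" "\<not> (p - 1) dvd t" by (auto dest: dvd_imp_le)
qed

lemma half_power_sum_cong_0:
  assumes "prime p" "even t" "\<not> (p - 1) dvd t"
  shows "[(\<Sum>s = 1..(p - 1) div 2. int s ^ t) = 0] (mod int p)" (is "[?S = 0] (mod _)")
proof -
  have "p \<noteq> 2" using assms(3) by auto
  then have "coprime 2 p"
    using assms(1) prime_odd_nat[OF assms(1)] prime_gt_1_nat[OF assms(1)] by simp
  then have "[?S + ?S = 0] (mod int p)"
    using grid_sum_reflect[OF assms(1) _ assms(2,3), of 2 1] Ssum_0_inverse[of 2 p t]
    by (simp add: grid_sum_def)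
  then have "int p dvd 2 * ?S" by (simp add: cong_0_iff)
  with \<open>coprime 2 p\<close> show ?thesis
    by (simp add: cong_0_iff coprime_commute coprime_dvd_mult_right_iff)
qed

lemma quarter_power_sum_cong:
  assumes "prime p" "even t" "\<not> (p - 1) dvd t"
  shows "[4 ^ (t + 1) * (\<Sum>r = 1..(p - 1) div 4. int r ^ t)
    = (-1) ^ ((p - 1) div 2) * sech_num t] (mod int p)"
proof -
  have "0 < t" using assms(3) by (rule contrapos_np) simp
  have "p \<noteq> 2" using assms(3) by auto
  then obtain n where p: "p = 2 * n + 1"
    using prime_odd_nat[OF assms(1)] prime_gt_1_nat[OF assms(1)] by (auto elim: oddE)
  define A where "A = (\<Sum>s = 1..n. (-1) ^ s * int s ^ t)"
  define B where "B = (\<Sum>s = 1..n. int s ^ t)"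
  have A: "2 ^ (t + 1) * A = (-1) ^ n * scaled_euler_poly t (int p)"
  proof -
    have "(of_int (2 ^ (t + 1) * A) :: rat) = of_int ((-1) ^ n * scaled_euler_poly t (int p))"
      using alternating_power_sum[OF assms(2) \<open>0 < t\<close>, of n, where 'a = rat] p
      by (simp add: A_def of_int_scaled_euler_poly add.commute)
    then show ?thesis by (simp only: of_int_eq_iff)
  qed
  have B: "[B = 0] (mod int p)"
    using half_power_sum_cong_0[OF assms] p by (simp add: B_def)
  have "(4::int) ^ (t + 1) = 2 ^ (t + 1) * 2 ^ (t + 1)"
    by (simp flip: power_mult_distrib)
  then have "4 ^ (t + 1) * (\<Sum>r = 1..(p - 1) div 4. int r ^ t) = 2 ^ (t + 1) * (A + B)"
    unfolding A_def B_def power_sum_add_alternating p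
    by (simp add: mult.assoc div_mult2_eq[symmetric])
  also have "\<dots> = (-1) ^ n * scaled_euler_poly t (int p) + 2 ^ (t + 1) * B"
    using A by (simp add: distrib_left)
  also have "[\<dots> = (-1) ^ n * sech_num t + 2 ^ (t + 1) * 0] (mod int p)"
    using scaled_euler_poly_cong[of t "int p"] B by (intro cong_add cong_mult cong_refl)
  finally show ?thesis using p by simp
qed

lemma Ssum_quarter_cong_euler:
  assumes "prime p" "1 \<le> k" "2 * k \<le> p - 3" "t = p - 1 - 2 * k"
  shows "[Ssum p t 0 (1 / 4) = (-1) ^ k * 4 ^ (2 * k - 1) * euler_int t] (mod int p)"
proof -
  define C where "C = (\<Sum>r = 1..(p - 1) div 4. int r ^ t)"
  have "5 \<le> p" using assms(2,3) by arith
  then have "odd p" using prime_odd_nat[OF assms(1)] by simp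
  note t = exponent_even_not_dvd[OF this assms(2-4)]
  have "(p - 1) div 2 = t div 2 + k" using assms(3,4) \<open>odd p\<close> by (auto elim!: oddE)
  then have "(-1) ^ ((p - 1) div 2) * sech_num t = (-1) ^ k * euler_int t"
    using t(1) by (simp add: sech_num_def cos_sign_def power_add)
  then have key: "[4 ^ (t + 1) * C = (-1) ^ k * euler_int t] (mod int p)"
    using quarter_power_sum_cong[OF assms(1) t] by (simp add: C_def)
  have "\<not> p dvd 4" using \<open>5 \<le> p\<close> by (auto dest: dvd_imp_le)
  then have fermat: "[4 ^ (p - 1) = 1] (mod int p)"
    using fermat_theorem[OF assms(1), of 4] by (simp flip: cong_int_iff)
  have "2 * k - 1 + (t + 1) = p - 1" using assms(2-4) by simp
  then have split_exp: "(4::int) ^ (p - 1) = 4 ^ (2 * k - 1) * 4 ^ (t + 1)"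
    by (metis power_add)
  have "[C = 4 ^ (p - 1) * C] (mod int p)"
    using cong_mult[OF fermat cong_refl[of C]] by (simp add: cong_sym_eq)
  also have "4 ^ (p - 1) * C = 4 ^ (2 * k - 1) * (4 ^ (t + 1) * C)"
    unfolding split_exp by (rule mult.assoc)
  also have "[4 ^ (2 * k - 1) * (4 ^ (t + 1) * C) = 4 ^ (2 * k - 1) * ((-1) ^ k * euler_int t)]
      (mod int p)"
    using key by (rule cong_mult[OF cong_refl])
  finally show ?thesis
    using Ssum_0_inverse[of 4 p t] by (simp add: C_def mult_ac)
qed

lemma rat_cong_of_int: "[a = b] (mod int p) \<Longrightarrow> rat_cong p (of_int a) (of_int b)"
  unfolding rat_cong_def by (intro exI[of _ "a - b"] exI[of _ 1]) (simp add: cong_iff_dvd_diff)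

theorem mainTheorem8:
  fixes p k t :: nat
  assumes "prime p" and "p \<ge> 5" and "1 \<le> k" and "2 * k \<le> p - 3"
    and "t = p - 1 - 2 * k"
  shows "rat_cong p ((-1) ^ k * 4 ^ (2 * k - 1) * euler_num t)
    (of_int (
       64 ^ t * Ssum p t 0 (1/256)
     + (12 ^ t + 18 ^ t) * Ssum p t (1/16) (5/72)
     + 12 ^ t * Ssum p t (5/72) (7/96)
     + (6 ^ t + 12 ^ t) * Ssum p t (7/48) (11/72)
     + (6 ^ t + 12 ^ t) * Ssum p t (13/72) (3/16)
     + (4 ^ t + 8 ^ t + 12 ^ t) * Ssum p t (11/48) (15/64)
     + 18 ^ t * Ssum p t (19/72) (17/64)
     + (4 ^ t + 8 ^ t + 12 ^ t + 18 ^ t) * Ssum p t (17/64) (13/48)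
     + 18 ^ t * Ssum p t (19/48) (29/72)
     + 12 ^ t * Ssum p t (41/96) (7/16)
     + (2 ^ t + 4 ^ t + 6 ^ t + 8 ^ t) * Ssum p t (15/32) (23/48)
     + (2 ^ t + 4 ^ t + 6 ^ t + 8 ^ t + 12 ^ t) * Ssum p t (23/48) (31/64)
     + (2 ^ t + 4 ^ t + 6 ^ t + 8 ^ t + 12 ^ t + 16 ^ t) * Ssum p t (31/64) (35/72)
     + (2 ^ t + 4 ^ t + 8 ^ t + 16 ^ t) * Ssum p t (35/72) (63/128)
     + (2 ^ t + 4 ^ t + 8 ^ t + 16 ^ t + 32 ^ t) * Ssum p t (63/128) (127/256)
     + (2 ^ t + 4 ^ t + 8 ^ t + 16 ^ t + 32 ^ t + 64 ^ t) * Ssum p t (127/256) (1/2)))"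
proof -
  have "odd p" using prime_odd_nat[OF assms(1)] assms(2) by simp
  note t = exponent_even_not_dvd[OF this assms(3-5)]
  have "(-1) ^ k * 4 ^ (2 * k - 1) * euler_num t = of_int ((-1) ^ k * 4 ^ (2 * k - 1) * euler_int t)"
    by simp
  then show ?thesis
    by (simp only:) (rule rat_cong_of_int, rule cong_trans[OF
        cong_sym[OF Ssum_quarter_cong_euler[OF assms(1,3-5)]]
        cong_sym[OF Ssum_combination_cong_quarter[OF assms(1,2) t]]])
qed

end
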